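(* Let $\mathcal V=\mathbb R^d$ with the Euclidean norm, and fix $r>0$ and an integer $\tau\ge0$. Consider linear losses $f_t(x)=\langle g_t,x\rangle$ with uniform delay $\tau$ ($\mathcal S_t=\{1,\dots,t-\tau-1\}$), and run DODA with guesses $\tilde g_{t+1/2}=g_{t-\tau-1}$ and constant learning rates $\eta,\gamma$, where $\eta=\eta(r,T,\tau,V^{\tau+1}_T)$ is uniquely determined by $r$, the horizon $T$, $\tau$ and $V^{\tau+1}_T$, and $\gamma\le\tau\eta$. Then it is impossible to guarantee a regret in $o(\max(V^{\tau+1}_T,\sqrt T))$: it is not true that for every $\varepsilon>0$ there exists $N$ such that, for every instance (horizon $T$, linear losses, initial point $x_1$, comparator $p$ with $\|p-x_1\|\le r$) with $\max(V^{\tau+1}_T,\sqrt T)\ge N$, the regret satisfies $R_T(p)\le\varepsilon\max(V^{\tau+1}_T,\sqrt T)$.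
   Context: DODA (unconstrained Euclidean): given $x_1$, $x_t=x_1-\eta\sum_{s\in\mathcal S_t}g_{s+1/2}$ and $x_{t+1/2}=x_t-\gamma\tilde g_{t+1/2}$; the played point at round $t$ is $x_{t+1/2}$, with feedback $g_{t+1/2}=\nabla f_t(x_{t+1/2})$, which for linear losses equals $g_t$. Regret: $R_T(p)=\sum_{t=1}^Tf_t(x_{t+1/2})-\sum_{t=1}^Tf_t(p)$. Convention $g_t=0$ for $t\le0$. $(\tau+1)$-variation: $V^{\tau+1}_T=\sum_{t=1}^T\|g_t-g_{t-\tau-1}\|^2$. *)

theory Defs
  imports "HOL-Analysis.Analysis"
begin

text \<open>Gradients g t for rounds t = 1,2,...; convention g t = 0 for t \<le> 0.
  The delayed gradient g_{t-tau-1} (zero when t - tau - 1 \<le> 0).\<close>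
definition delayed_grad :: "(nat \<Rightarrow> 'a::real_vector) \<Rightarrow> nat \<Rightarrow> nat \<Rightarrow> 'a" where
  "delayed_grad g tau t = (if tau + 1 < t then g (t - tau - 1) else 0)"

definition variation :: "(nat \<Rightarrow> 'a::real_normed_vector) \<Rightarrow> nat \<Rightarrow> nat \<Rightarrow> real" where
  "variation g tau T = (\<Sum>t = 1..T. (norm (g t - delayed_grad g tau t))\<^sup>2)"

text \<open>DODA base iterate with uniform delay: S_t = {1,...,t-tau-1} (empty if t \<le> tau+1),
  x_t = x_1 - eta * sum_{s in S_t} g_s  (for linear losses g_{s+1/2} = g_s).\<close>
definition doda_x :: "real \<Rightarrow> (nat \<Rightarrow> 'a::real_vector) \<Rightarrow> 'a \<Rightarrow> nat \<Rightarrow> nat \<Rightarrow> 'a" where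
  "doda_x eta g x1 tau t = x1 - eta *\<^sub>R (\<Sum>s \<in> {1..t - tau - 1}. g s)"

definition doda_play :: "real \<Rightarrow> real \<Rightarrow> (nat \<Rightarrow> 'a::real_vector) \<Rightarrow> 'a \<Rightarrow> nat \<Rightarrow> nat \<Rightarrow> 'a" where
  "doda_play eta gamma g x1 tau t = doda_x eta g x1 tau t - gamma *\<^sub>R delayed_grad g tau t"

definition doda_regret :: "real \<Rightarrow> real \<Rightarrow> (nat \<Rightarrow> 'a::real_inner) \<Rightarrow> 'a \<Rightarrow> nat \<Rightarrow> nat \<Rightarrow> 'a \<Rightarrow> real" where
  "doda_regret eta gamma g x1 tau T p =
     (\<Sum>t = 1..T. g t \<bullet> doda_play eta gamma g x1 tau t) - (\<Sum>t = 1..T. g t \<bullet> p)"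

end

theory Submission
  imports Defs
begin

text \<open>Both lower-bound instances are one-dimensional sequences placed along a unit vector, and
  both have horizon \<open>T = 4 q\<^sup>2\<close> and the same \<open>(\<tau>+1)\<close>-variation \<open>6 (\<tau> + 1)\<close>, so DODA must use one
  and the same step size \<open>\<eta>\<close> on them. The sequence equal to \<open>+1\<close> for \<open>q\<^sup>2\<close> rounds and then
  \<open>-1\<close> for \<open>q\<^sup>2\<close> rounds has total gradient zero, yet the iterates drift away while the sign is
  \<open>+1\<close> and pay for it after the switch: the regret is at least \<open>\<eta> q\<^sup>2\<close>. The sequence equal to \<open>\<surd>3\<close>
  for \<open>q\<close> rounds moves the iterates by only \<open>O((\<tau>+1) \<eta> q)\<close>, so against the comparator at
  distance \<open>r\<close> the regret is at least \<open>\<surd>3 r q - 3 (\<tau>+1) \<eta> q\<^sup>2\<close>. Whichever side of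
  \<open>r / (6 (\<tau>+1) q)\<close> the step size lies on, one of the two regrets is at least
  \<open>r q / (6 (\<tau>+1)) = r \<surd>T / (12 (\<tau>+1))\<close>, while \<open>max (V, \<surd>T) = \<surd>T\<close> for large \<open>q\<close>.\<close>

lemma sum_greaterThanAtMost_split:
  fixes f :: "nat \<Rightarrow> 'a::comm_monoid_add"
  assumes "a \<le> b" "b \<le> c"
  shows "sum f {a<..c} = sum f {a<..b} + sum f {b<..c}"
proof -
  have "{a<..c} = {a<..b} \<union> {b<..c}" using assms by auto
  then show ?thesis by (simp add: sum.union_disjoint)
qed

lemma sum_affine_greaterThanAtMost:
  fixes \<alpha> \<beta> :: real
  assumes "a \<le> b"
  shows "(\<Sum>t\<in>{a<..b}. \<alpha> + \<beta> * real t) = (real b - real a) * (\<alpha> + \<beta> * (real a + real b + 1) / 2)"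
  using assms
proof (induction b rule: dec_induct)
  case (step b)
  have "{a<..Suc b} = insert (Suc b) {a<..b}" using step.hyps by auto
  then show ?case using step.IH by (simp add: field_simps)
qed simp

lemma sum_if_greaterThanAtMost:
  assumes "a \<le> b" "b \<le> T"
  shows "(\<Sum>t=1..T. if a < t \<and> t \<le> b then (c::real) else 0) = real (b - a) * c"
proof -
  have "(\<Sum>t=1..T. if a < t \<and> t \<le> b then c else 0) = (\<Sum>t\<in>{1..T} \<inter> {a<..b}. c)"
    by (simp add: sum.inter_filter[symmetric] Int_def)
  also have "{1..T} \<inter> {a<..b} = {a<..b}" using assms by auto
  finally show ?thesis by simp
qed

lemma delayed_grad_scaleR: "delayed_grad (\<lambda>t. a t *\<^sub>R e) tau t = delayed_grad a tau t *\<^sub>R e"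
  by (simp add: delayed_grad_def)

lemma doda_play_scaleR:
  "doda_play eta gamma (\<lambda>t. a t *\<^sub>R e) (x *\<^sub>R e) tau t = doda_play eta gamma a x tau t *\<^sub>R e"
  by (simp add: doda_play_def doda_x_def delayed_grad_scaleR scaleR_sum_left[symmetric] algebra_simps)

lemma doda_regret_scaleR_unit:
  fixes e :: "'a::real_inner"
  assumes "e \<bullet> e = 1"
  shows "doda_regret eta gamma (\<lambda>t. a t *\<^sub>R e) (x *\<^sub>R e) tau T (p *\<^sub>R e) = doda_regret eta gamma a x tau T p"
  by (simp add: doda_regret_def doda_play_scaleR assms mult.commute)

lemma variation_scaleR_unit:
  fixes e :: "'a::real_normed_vector"
  assumes "norm e = 1"
  shows "variation (\<lambda>t. a t *\<^sub>R e) tau T = variation a tau T"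
  unfolding variation_def delayed_grad_scaleR
  by (simp add: scaleR_diff_left[symmetric] assms)

lemma doda_play_from_0:
  fixes a :: "nat \<Rightarrow> real"
  shows "doda_play eta gamma a 0 tau t = - eta * (\<Sum>s=1..t - tau - 1. a s) - gamma * delayed_grad a tau t"
  by (simp add: doda_play_def doda_x_def)

definition up_down :: "nat \<Rightarrow> nat \<Rightarrow> real" where
  "up_down m t = (if t \<le> m then 1 else if t \<le> 2 * m then -1 else 0)"

lemma sum_up_down:
  "j \<le> 2 * m \<Longrightarrow> (\<Sum>s=1..j. up_down m s) = real (min j (2 * m - j))"
  by (induction j) (auto simp: up_down_def min_def)

lemma doda_play_up_down:
  assumes "tau + 1 < t" "t \<le> 2 * m + tau + 1"
  shows "doda_play eta gamma (up_down m) 0 tau t =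
    - eta * real (min (t - tau - 1) (2 * m - (t - tau - 1))) - gamma * up_down m (t - tau - 1)"
proof -
  have "t - tau - 1 \<le> 2 * m" using assms(2) by simp
  then have "(\<Sum>s=1..t - tau - 1. up_down m s) = real (min (t - tau - 1) (2 * m - (t - tau - 1)))"
    by (rule sum_up_down)
  then show ?thesis using assms(1) by (simp add: doda_play_from_0 delayed_grad_def)
qed

lemma variation_up_down:
  assumes "tau + 1 \<le> m" "2 * m + tau + 1 \<le> T"
  shows "variation (up_down m) tau T = 6 * (real tau + 1)"
proof -
  have "variation (up_down m) tau T = (\<Sum>t=1..T. (if 0 < t \<and> t \<le> tau + 1 then 1 else 0)
      + (if m < t \<and> t \<le> m + tau + 1 then 4 else 0) + (if 2 * m < t \<and> t \<le> 2 * m + tau + 1 then 1 else 0))"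
    unfolding variation_def using assms by (intro sum.cong) (auto simp: up_down_def delayed_grad_def)
  also have "\<dots> = 6 * (real tau + 1)"
    using assms sum_if_greaterThanAtMost[of 0 "tau + 1" T 1] sum_if_greaterThanAtMost[of m "m + tau + 1" T 4]
      sum_if_greaterThanAtMost[of "2 * m" "2 * m + tau + 1" T 1]
    by (simp add: sum.distrib)
  finally show ?thesis .
qed

lemma doda_regret_up_down_phases:
  assumes "tau + 1 \<le> m" "2 * m \<le> T"
  shows "doda_regret eta gamma (up_down m) 0 tau T 0
      = (\<Sum>t\<in>{tau+1<..m}. (eta * (real tau + 1) - gamma) + (- eta) * real t)
      + (\<Sum>t\<in>{m<..m+tau+1}. (gamma - eta * (real tau + 1)) + eta * real t)
      + (\<Sum>t\<in>{m+tau+1<..2*m}. (eta * (2 * real m + real tau + 1) - gamma) + (- eta) * real t)"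
proof -
  define h where "h t = up_down m t * doda_play eta gamma (up_down m) 0 tau t" for t
  have "doda_regret eta gamma (up_down m) 0 tau T 0 = sum h {0<..T}"
    by (simp add: doda_regret_def h_def atLeastSucAtMost_greaterThanAtMost[of 0, simplified])
  also have "\<dots> = sum h {0<..tau+1} + sum h {tau+1<..m} + sum h {m<..m+tau+1}
      + sum h {m+tau+1<..2*m} + sum h {2*m<..T}"
    using assms sum_greaterThanAtMost_split[of 0 "tau+1" T h] sum_greaterThanAtMost_split[of "tau+1" m T h]
      sum_greaterThanAtMost_split[of m "m+tau+1" T h] sum_greaterThanAtMost_split[of "m+tau+1" "2*m" T h]
    by simp
  also have "sum h {0<..tau+1} = 0"
    by (intro sum.neutral) (auto simp: h_def doda_play_from_0 delayed_grad_def)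
  also have "sum h {2*m<..T} = 0"
    by (intro sum.neutral) (auto simp: h_def up_down_def)
  also have "sum h {tau+1<..m} = (\<Sum>t\<in>{tau+1<..m}. (eta * (real tau + 1) - gamma) + (- eta) * real t)"
    by (intro sum.cong) (auto simp: h_def doda_play_up_down up_down_def algebra_simps)
  also have "sum h {m<..m+tau+1} = (\<Sum>t\<in>{m<..m+tau+1}. (gamma - eta * (real tau + 1)) + eta * real t)"
    using assms by (intro sum.cong) (auto simp: h_def doda_play_up_down up_down_def algebra_simps)
  also have "sum h {m+tau+1<..2*m} =
      (\<Sum>t\<in>{m+tau+1<..2*m}. (eta * (2 * real m + real tau + 1) - gamma) + (- eta) * real t)"
    using assms by (intro sum.cong) (auto simp: h_def doda_play_up_down up_down_def algebra_simps)
  finally show ?thesis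
    by (simp only: add_0_left add_0_right)
qed

lemma doda_regret_up_down:
  assumes "tau + 1 \<le> m" "2 * m \<le> T"
  shows "doda_regret eta gamma (up_down m) 0 tau T 0 =
    eta * (real m * (2 * real tau + 1) - 3 * real tau * (real tau + 1) / 2)
    + gamma * (3 * (real tau + 1) - 2 * real m)"
proof -
  have phase1: "tau + 1 \<le> m" and phase2: "m \<le> m + tau + 1" and phase3: "m + tau + 1 \<le> 2 * m"
    using assms(1) by auto
  show ?thesis
    unfolding doda_regret_up_down_phases[OF assms] sum_affine_greaterThanAtMost[OF phase1]
      sum_affine_greaterThanAtMost[OF phase2] sum_affine_greaterThanAtMost[OF phase3]
    by (simp add: field_simps)
qed

lemma doda_regret_up_down_ge:
  assumes "tau + 1 \<le> m" "2 * m \<le> T" "0 \<le> gamma" "gamma \<le> real tau * eta"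
  shows "eta * real m \<le> doda_regret eta gamma (up_down m) 0 tau T 0"
proof -
  have "doda_regret eta gamma (up_down m) 0 tau T 0 = eta * real m
      + 2 * (real tau * eta - gamma) * (real m - real tau - 1)
      + gamma * (real tau + 1) + real tau * eta * (real tau + 1) / 2"
    using assms(1,2) by (simp add: doda_regret_up_down field_simps)
  moreover have "0 \<le> (real tau * eta - gamma) * (real m - real tau - 1)"
    using assms by (intro mult_nonneg_nonneg) auto
  moreover have "0 \<le> gamma * (real tau + 1)" "0 \<le> real tau * eta * (real tau + 1) / 2"
    using assms(3,4) by simp_all
  ultimately show ?thesis by linarith
qed

definition pulse :: "real \<Rightarrow> nat \<Rightarrow> nat \<Rightarrow> real" where
  "pulse c k t = (if t \<le> k then c else 0)"

lemma sum_pulse: "(\<Sum>s=1..j. pulse c k s) = c * real (min j k)"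
  by (induction j) (auto simp: pulse_def min_def algebra_simps)

lemma variation_pulse:
  assumes "tau + 1 \<le> k" "k + tau + 1 \<le> T"
  shows "variation (pulse c k) tau T = 2 * (real tau + 1) * c\<^sup>2"
proof -
  have "variation (pulse c k) tau T = (\<Sum>t=1..T. (if 0 < t \<and> t \<le> tau + 1 then c\<^sup>2 else 0)
      + (if k < t \<and> t \<le> k + tau + 1 then c\<^sup>2 else 0))"
    unfolding variation_def using assms by (intro sum.cong) (auto simp: pulse_def delayed_grad_def)
  also have "\<dots> = 2 * (real tau + 1) * c\<^sup>2"
    using assms sum_if_greaterThanAtMost[of 0 "tau + 1" T "c\<^sup>2"]
      sum_if_greaterThanAtMost[of k "k + tau + 1" T "c\<^sup>2"]
    by (simp add: sum.distrib algebra_simps)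
  finally show ?thesis .
qed

lemma doda_regret_pulse_ge:
  assumes "k \<le> T" "0 \<le> c" "0 \<le> eta" "0 \<le> gamma"
  shows "- c\<^sup>2 * real k * (eta * real k + gamma) - p * c * real k \<le> doda_regret eta gamma (pulse c k) 0 tau T p"
proof -
  have play: "- c * (eta * real k + gamma) \<le> doda_play eta gamma (pulse c k) 0 tau t" if "t \<le> k" for t
  proof -
    have "eta * (c * real (min (t - tau - 1) k)) \<le> eta * (c * real k)"
      using assms by (intro mult_left_mono) auto
    moreover have "gamma * delayed_grad (pulse c k) tau t \<le> gamma * c"
      using assms by (intro mult_left_mono) (auto simp: delayed_grad_def pulse_def)
    ultimately show ?thesis using sum_pulse[of c k "t - tau - 1"]
      by (simp add: doda_play_from_0 algebra_simps)
  qed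
  have "- c\<^sup>2 * (eta * real k + gamma) \<le> c * doda_play eta gamma (pulse c k) 0 tau t" if "t \<le> k" for t
    using mult_left_mono[OF play[OF that] assms(2)] by (simp add: power2_eq_square)
  then have "(\<Sum>t=1..T. if 0 < t \<and> t \<le> k then - c\<^sup>2 * (eta * real k + gamma) else 0)
      \<le> (\<Sum>t=1..T. pulse c k t * doda_play eta gamma (pulse c k) 0 tau t)"
    by (intro sum_mono) (auto simp: pulse_def)
  moreover have "(\<Sum>t=1..T. pulse c k t * p) = p * c * real k"
    using assms(1) sum_pulse[of c k T] by (simp add: sum_distrib_right[symmetric] min_absorb2)
  ultimately show ?thesis
    using assms(1) sum_if_greaterThanAtMost[of 0 k T "- c\<^sup>2 * (eta * real k + gamma)"]
    by (simp add: doda_regret_def mult_ac)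
qed

lemma doda_regret_up_down_large_eta:
  assumes "tau + 1 \<le> q" "r \<le> 6 * (real tau + 1) * real q * eta" "0 \<le> gamma" "gamma \<le> real tau * eta"
  shows "r * real q / (6 * (real tau + 1)) \<le> doda_regret eta gamma (up_down (q\<^sup>2)) 0 tau (4 * q\<^sup>2) 0"
proof -
  have "r * real q \<le> 6 * (real tau + 1) * real q * eta * real q"
    using assms(2) by (intro mult_right_mono) auto
  then have "r * real q / (6 * (real tau + 1)) \<le> eta * real (q\<^sup>2)"
    by (simp add: power2_eq_square field_simps)
  also have "\<dots> \<le> doda_regret eta gamma (up_down (q\<^sup>2)) 0 tau (4 * q\<^sup>2) 0"
    using assms(1,3,4) by (intro doda_regret_up_down_ge) (auto simp: power2_eq_square intro: le_trans)
  finally show ?thesis .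
qed

lemma doda_regret_pulse_small_eta:
  assumes "0 < q" "0 < r" "6 * (real tau + 1) * real q * eta < r"
    and "0 \<le> eta" "0 \<le> gamma" "gamma \<le> real tau * eta"
  shows "r * real q / (6 * (real tau + 1)) \<le> doda_regret eta gamma (pulse (sqrt 3) q) 0 tau (4 * q\<^sup>2) (- r)"
proof -
  have q1: "1 \<le> real q" using assms(1) by simp
  have "gamma \<le> real tau * eta * real q"
    using assms(6) mult_left_mono[OF q1, of "real tau * eta"] assms(4) by simp
  then have "3 * real q * (eta * real q + gamma) \<le> 3 * real q * ((real tau + 1) * eta * real q)"
    by (intro mult_left_mono) (auto simp: algebra_simps)
  also have "\<dots> < r * real q / 2"
  proof -
    have "6 * (real tau + 1) * real q * eta * real q < r * real q"
      using assms(1,3) by (intro mult_strict_right_mono) auto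
    then show ?thesis by (simp add: field_simps)
  qed
  finally have loss: "(sqrt 3)\<^sup>2 * real q * (eta * real q + gamma) < r * real q / 2"
    by simp
  have gain: "r * real q \<le> r * sqrt 3 * real q"
    using assms(2) mult_right_mono[of 1 "sqrt 3" "r * real q"] by (simp add: mult_ac)
  have "q \<le> 4 * q\<^sup>2" by (simp add: power2_eq_square)
  then have "r * sqrt 3 * real q - (sqrt 3)\<^sup>2 * real q * (eta * real q + gamma)
      \<le> doda_regret eta gamma (pulse (sqrt 3) q) 0 tau (4 * q\<^sup>2) (- r)"
    using doda_regret_pulse_ge[of q "4 * q\<^sup>2" "sqrt 3" eta gamma "- r" tau] assms(4,5) by simp
  moreover have "r * real q / (6 * (real tau + 1)) \<le> r * real q / 2"
    using assms(1,2) by (intro divide_left_mono) auto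
  ultimately show ?thesis
    using loss gain by linarith
qed

lemma doda_regret_lower_bound:
  fixes e :: "'a::real_inner"
  assumes e: "norm e = 1" and r: "0 < r" and q: "tau + 1 \<le> q"
    and eta: "0 \<le> eta" and gamma: "0 \<le> gamma" "gamma \<le> real tau * eta"
  shows "\<exists>g x1 p :: 'a. norm (p - x1) \<le> r \<and> variation g tau (4 * q\<^sup>2) = 6 * (real tau + 1)
    \<and> r * real q / (6 * (real tau + 1)) \<le> doda_regret eta gamma g x1 tau (4 * q\<^sup>2) p"
proof -
  have ee: "e \<bullet> e = 1" using e by (simp add: dot_square_norm)
  have q_sq: "q \<le> q\<^sup>2" by (simp add: power2_eq_square)
  show ?thesis
  proof (cases "r \<le> 6 * (real tau + 1) * real q * eta")
    case True
    have "tau + 1 \<le> q\<^sup>2" "2 * q\<^sup>2 + tau + 1 \<le> 4 * q\<^sup>2" using q q_sq by auto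
    then show ?thesis
      using r doda_regret_up_down_large_eta[OF q True gamma]
        doda_regret_scaleR_unit[OF ee, of eta gamma "up_down (q\<^sup>2)" 0 tau "4 * q\<^sup>2" 0]
      by (intro exI[of _ "\<lambda>t. up_down (q\<^sup>2) t *\<^sub>R e"] exI[of _ 0])
        (simp add: variation_scaleR_unit[OF e] variation_up_down)
  next
    case False
    have "q + tau + 1 \<le> 4 * q\<^sup>2" using q q_sq by auto
    then show ?thesis
      using r e q False doda_regret_pulse_small_eta[of q r tau eta gamma] eta gamma
        doda_regret_scaleR_unit[OF ee, of eta gamma "pulse (sqrt 3) q" 0 tau "4 * q\<^sup>2" "- r"]
      by (intro exI[of _ "\<lambda>t. pulse (sqrt 3) q t *\<^sub>R e"] exI[of _ 0] exI[of _ "(- r) *\<^sub>R e"])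
        (simp add: variation_scaleR_unit[OF e] variation_pulse)
  qed
qed

lemma doda_regret_not_little_o:
  fixes e :: "'a::real_inner" and eta gamma :: "nat \<Rightarrow> real \<Rightarrow> real"
  assumes e: "norm e = 1" and r: "0 < r" and eta: "\<And>T V. 0 \<le> eta T V"
    and gamma: "\<And>T V. 0 \<le> gamma T V \<and> gamma T V \<le> real tau * eta T V"
  shows "\<exists>T (g :: nat \<Rightarrow> 'a) x1 p. 1 \<le> T \<and> norm (p - x1) \<le> r \<and>
    N \<le> max (variation g tau T) (sqrt (real T)) \<and>
    r / (24 * (real tau + 1)) * max (variation g tau T) (sqrt (real T))
      < doda_regret (eta T (variation g tau T)) (gamma T (variation g tau T)) g x1 tau T p"
proof -
  define q where "q = nat \<lceil>N\<rceil> + 3 * (tau + 1)"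
  define T where "T = 4 * q\<^sup>2"
  define V where "V = 6 * (real tau + 1)"
  have q: "tau + 1 \<le> q" by (simp add: q_def)
  obtain g :: "nat \<Rightarrow> 'a" and x1 p where g: "norm (p - x1) \<le> r" "variation g tau T = V"
    "r * real q / (6 * (real tau + 1)) \<le> doda_regret (eta T V) (gamma T V) g x1 tau T p"
    using doda_regret_lower_bound[OF e r q eta gamma[THEN conjunct1] gamma[THEN conjunct2]]
    unfolding T_def V_def by blast
  have "sqrt (real T) = 2 * real q" "V \<le> 2 * real q"
    unfolding T_def V_def q_def by (simp_all add: real_sqrt_mult)
  then have max: "max V (sqrt (real T)) = 2 * real q"
    by simp
  have "r / (24 * (real tau + 1)) * (2 * real q) = r * real q / (12 * (real tau + 1))"
    by (simp add: field_simps)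
  also have "\<dots> < r * real q / (6 * (real tau + 1))"
    using r q by (intro divide_strict_left_mono) auto
  finally have "r / (24 * (real tau + 1)) * max (variation g tau T) (sqrt (real T))
      < doda_regret (eta T (variation g tau T)) (gamma T (variation g tau T)) g x1 tau T p"
    using g(3) unfolding g(2) max by linarith
  moreover have "N \<le> max (variation g tau T) (sqrt (real T))"
    using real_nat_ceiling_ge[of N] unfolding g(2) max q_def by simp
  moreover have "1 \<le> T" using q by (simp add: T_def)
  ultimately show ?thesis using g(1) by blast
qed

theorem theorem6:
  fixes r :: real and tau :: nat
    and eta gamma :: "real \<Rightarrow> nat \<Rightarrow> nat \<Rightarrow> real \<Rightarrow> real"
  assumes r_pos: "r > 0"
    and eta_pos: "\<forall>T V. eta r T tau V > 0"
    and gamma_bnd: "\<forall>T V. 0 \<le> gamma r T tau V \<and> gamma r T tau V \<le> real tau * eta r T tau V"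
  shows "\<not> (\<forall>\<epsilon>>0. \<exists>N::real. \<forall>(T::nat) (g :: nat \<Rightarrow> real^'d) (x1 :: real^'d) (p :: real^'d).
            T \<ge> 1 \<longrightarrow> norm (p - x1) \<le> r \<longrightarrow>
            max (variation g tau T) (sqrt (real T)) \<ge> N \<longrightarrow>
            doda_regret (eta r T tau (variation g tau T)) (gamma r T tau (variation g tau T))
                        g x1 tau T p
              \<le> \<epsilon> * max (variation g tau T) (sqrt (real T)))"
proof -
  have "\<exists>T (g :: nat \<Rightarrow> real^'d) x1 p. 1 \<le> T \<and> norm (p - x1) \<le> r \<and>
      N \<le> max (variation g tau T) (sqrt (real T)) \<and>
      r / (24 * (real tau + 1)) * max (variation g tau T) (sqrt (real T))
        < doda_regret (eta r T tau (variation g tau T)) (gamma r T tau (variation g tau T)) g x1 tau T p"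
    for N
    using doda_regret_not_little_o[OF norm_axis_1 r_pos,
        where tau = tau and eta = "\<lambda>T V. eta r T tau V" and gamma = "\<lambda>T V. gamma r T tau V"]
      eta_pos gamma_bnd by (simp add: less_imp_le)
  moreover have "r / (24 * (real tau + 1)) > 0" using r_pos by simp
  ultimately show ?thesis by (meson not_le)
qed

end
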